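(* For all even integers $a, b \ge 2$, $R_\mathrm{ord}(M_a^\mathrm{nest}, M_b^\mathrm{nest}) = a + b - 2$.
   Context: All graphs are finite, simple and undirected, and a graph of order $n$ has vertex set $\{0,1,\ldots,n-1\}$; $K_n$ is the complete graph on $\{0,\ldots,n-1\}$. A $2$-edge-coloring of $K_n$ assigns each edge a color in $\{1,2\}$. For a graph $H$ and such a coloring, an embedding of $H$ in color $j$ is an injective map $\varphi\colon V(H)\to V(K_n)$ such that for every edge $uv$ of $H$ the edge $\{\varphi(u),\varphi(v)\}$ has color $j$; it is increasing if $\varphi(0)<\cdots<\varphi(|H|-1)$. The ordered Ramsey number $R_\mathrm{ord}(H_1,H_2)$ is the smallest $n$ such that every $2$-edge-coloring of $K_n$ admits an increasing embedding of $H_1$ in color $1$ or an increasing embedding of $H_2$ in color $2$. For even $n\ge2$, the nested matching $M_n^\mathrm{nest}$ is the graph of order $n$ whose edges are exactly $\{v, n-1-v\}$ for $0\le v\le n/2-1$. *)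

theory Defs
  imports Main
begin

text \<open>A finite simple graph of order n on vertex set {0..<n}, represented by its order
 and its edge set (a set of 2-element subsets of {0..<n}).\<close>

type_synonym graph = "nat \<times> nat set set"

definition order :: "graph \<Rightarrow> nat" where "order H = fst H"
definition edges :: "graph \<Rightarrow> nat set set" where "edges H = snd H"

definition two_coloring :: "nat \<Rightarrow> (nat set \<Rightarrow> nat) \<Rightarrow> bool" where
  "two_coloring n c \<longleftrightarrow> (\<forall>u<n. \<forall>v<n. u \<noteq> v \<longrightarrow> c {u, v} \<in> {1, 2})"

definition incr_embedding :: "graph \<Rightarrow> nat \<Rightarrow> (nat set \<Rightarrow> nat) \<Rightarrow> nat \<Rightarrow> (nat \<Rightarrow> nat) \<Rightarrow> bool" where
  "incr_embedding H n c j \<phi> \<longleftrightarrow>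
     \<phi> ` {0..<order H} \<subseteq> {0..<n} \<and>
     strict_mono_on {0..<order H} \<phi> \<and>
     (\<forall>u<order H. \<forall>v<order H. {u, v} \<in> edges H \<longrightarrow> c {\<phi> u, \<phi> v} = j)"

definition ordered_ramsey_property :: "graph \<Rightarrow> graph \<Rightarrow> nat \<Rightarrow> bool" where
  "ordered_ramsey_property H1 H2 n \<longleftrightarrow>
     (\<forall>c. two_coloring n c \<longrightarrow>
        (\<exists>\<phi>. incr_embedding H1 n c 1 \<phi>) \<or> (\<exists>\<phi>. incr_embedding H2 n c 2 \<phi>))"

definition R_ord :: "graph \<Rightarrow> graph \<Rightarrow> nat" where
  "R_ord H1 H2 = (LEAST n. ordered_ramsey_property H1 H2 n)"

definition nested_matching :: "nat \<Rightarrow> graph" where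
  "nested_matching n = (n, {{v, n - 1 - v} | v. v < n div 2})"

end

theory Submission
  imports Defs
begin

text \<open>Upper bound: to find, for some colour \<open>i\<close>, a colour-\<open>i\<close> nested matching with \<open>k\<^sub>i\<close>
  edges in a colouring of an interval of \<open>2 \<Sum>\<^sub>i (k\<^sub>i - 1) + 2\<close> vertices, look at the colour
  \<open>j\<close> of the edge joining the two endpoints. If \<open>k\<^sub>j = 1\<close> this edge alone
  is the required nested matching; otherwise recurse into the interior with \<open>k\<^sub>j\<close> lowered by
  one, and a colour-\<open>j\<close> nested matching found there extends by the outer edge.
  Lower bound: on \<open>a + b - 3\<close> vertices colour an edge 2 iff both ends lie in the window of
  \<open>b - 1\<close> consecutive vertices that starts after the first \<open>a/2 - 1\<close> vertices. The outer edge
  of an increasing copy of \<open>M\<^sub>b\<close> spans \<open>b\<close> vertices, so it leaves the window, while the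
  inner edge of an increasing copy of \<open>M\<^sub>a\<close> has at least \<open>a/2 - 1\<close> vertices on either side,
  so it lies inside the window.\<close>

definition nested_embedding ::
    "(nat set \<Rightarrow> nat) \<Rightarrow> nat \<Rightarrow> nat \<Rightarrow> nat set \<Rightarrow> (nat \<Rightarrow> nat) \<Rightarrow> bool" where
  "nested_embedding c j k I \<phi> \<longleftrightarrow>
     \<phi> ` {0..<2*k} \<subseteq> I \<and> strict_mono_on {0..<2*k} \<phi> \<and>
     (\<forall>i<k. c {\<phi> i, \<phi> (2*k - 1 - i)} = j)"

lemma nested_embedding_mono:
  "nested_embedding c j k I \<phi> \<Longrightarrow> I \<subseteq> J \<Longrightarrow> nested_embedding c j k J \<phi>"
  unfolding nested_embedding_def by blast

lemma nested_embedding_zero: "nested_embedding c j 0 I \<phi>"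
  unfolding nested_embedding_def by (simp add: strict_mono_on_def)

lemma order_nested_matching: "order (nested_matching n) = n"
  by (simp add: nested_matching_def order_def)

lemma edges_nested_matching: "edges (nested_matching n) = {{v, n - 1 - v} | v. v < n div 2}"
  by (simp add: nested_matching_def edges_def)

lemma nested_matching_edges_monochromatic_iff:
  "(\<forall>u<2*k. \<forall>v<2*k. {u, v} \<in> edges (nested_matching (2*k)) \<longrightarrow> c {\<phi> u, \<phi> v} = j)
    \<longleftrightarrow> (\<forall>i<k. c {\<phi> i, \<phi> (2*k - 1 - i)} = j)"
proof
  assume edges: "\<forall>u<2*k. \<forall>v<2*k. {u, v} \<in> edges (nested_matching (2*k)) \<longrightarrow> c {\<phi> u, \<phi> v} = j"
  show "\<forall>i<k. c {\<phi> i, \<phi> (2*k - 1 - i)} = j"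
  proof (intro allI impI)
    fix i assume "i < k"
    then have "{i, 2*k - 1 - i} \<in> edges (nested_matching (2*k))"
      unfolding edges_nested_matching by (intro CollectI exI[of _ i]) simp
    then show "c {\<phi> i, \<phi> (2*k - 1 - i)} = j"
      using edges \<open>i < k\<close> by simp
  qed
next
  assume pairs: "\<forall>i<k. c {\<phi> i, \<phi> (2*k - 1 - i)} = j"
  show "\<forall>u<2*k. \<forall>v<2*k. {u, v} \<in> edges (nested_matching (2*k)) \<longrightarrow> c {\<phi> u, \<phi> v} = j"
  proof (intro allI impI)
    fix u v assume "{u, v} \<in> edges (nested_matching (2*k))"
    then obtain w where "w < k" "{u, v} = {w, 2*k - 1 - w}"
      unfolding edges_nested_matching by auto
    then have "{\<phi> u, \<phi> v} = {\<phi> w, \<phi> (2*k - 1 - w)}"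
      by (auto simp: doubleton_eq_iff)
    then show "c {\<phi> u, \<phi> v} = j"
      using pairs \<open>w < k\<close> by simp
  qed
qed

lemma incr_embedding_nested_matching_iff:
  "incr_embedding (nested_matching (2*k)) n c j \<phi> \<longleftrightarrow> nested_embedding c j k {0..<n} \<phi>"
  unfolding incr_embedding_def nested_embedding_def order_nested_matching
    nested_matching_edges_monochromatic_iff ..

lemma nested_embedding_extend:
  assumes "nested_embedding c j k {s<..<t} \<psi>" "s < t" "c {s, t} = j"
  shows "\<exists>\<phi>. nested_embedding c j (Suc k) {s..t} \<phi>"
proof -
  define \<phi> where "\<phi> i = (if i = 0 then s else if i = 2*k + 1 then t else \<psi> (i - 1))" for i
  have \<psi>_range: "s < \<psi> i \<and> \<psi> i < t" if "i < 2*k" for i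
    using assms(1) that unfolding nested_embedding_def by (auto simp: image_subset_iff)
  have \<psi>_mono: "\<psi> i < \<psi> l" if "i < l" "l < 2*k" for i l
    using assms(1) that unfolding nested_embedding_def by (auto intro: strict_mono_onD)
  have \<psi>_pairs: "c {\<psi> i, \<psi> (2*k - 1 - i)} = j" if "i < k" for i
    using assms(1) that unfolding nested_embedding_def by auto
  have \<phi>_first: "\<phi> 0 = s" and \<phi>_last: "\<phi> (Suc (2*k)) = t"
    by (simp_all add: \<phi>_def)
  have \<phi>_inner: "\<phi> (Suc i) = \<psi> i" if "i < 2*k" for i
    using that by (simp add: \<phi>_def)
  have index_cases: "i = 0 \<or> i = 2*k + 1 \<or> (\<exists>i'<2*k. i = Suc i')" if "i < 2 * Suc k" for i
    using that by (cases i) auto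
  have "\<phi> i \<in> {s..t}" if "i < 2 * Suc k" for i
    using index_cases[OF that] assms(2)
    by (elim disjE exE conjE) (simp_all add: \<phi>_first \<phi>_last \<phi>_inner \<psi>_range less_imp_le)
  then have "\<phi> ` {0..<2 * Suc k} \<subseteq> {s..t}" by (simp add: image_subset_iff)
  moreover have "strict_mono_on {0..<2 * Suc k} \<phi>"
  proof (rule strict_mono_onI)
    fix i l assume "i \<in> {0..<2 * Suc k}" "l \<in> {0..<2 * Suc k}" "i < l"
    then have i: "i < 2 * Suc k" and l: "l < 2 * Suc k" by auto
    show "\<phi> i < \<phi> l"
      using index_cases[OF i] index_cases[OF l] \<open>i < l\<close> assms(2)
      by (elim disjE exE conjE) (simp_all add: \<phi>_first \<phi>_last \<phi>_inner \<psi>_range \<psi>_mono)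
  qed
  moreover have "c {\<phi> i, \<phi> (2 * Suc k - 1 - i)} = j" if "i < Suc k" for i
  proof (cases i)
    case 0
    then show ?thesis using assms(3) by (simp add: \<phi>_first \<phi>_last)
  next
    case (Suc i')
    then have "2 * Suc k - 1 - i = Suc (2*k - 1 - i')" using that by simp
    then show ?thesis using \<psi>_pairs[of i'] \<phi>_inner Suc that by simp
  qed
  ultimately show ?thesis
    unfolding nested_embedding_def by blast
qed

lemma nested_embedding_exists:
  assumes "finite C" "\<forall>u\<in>{s..t}. \<forall>v\<in>{s..t}. u \<noteq> v \<longrightarrow> c {u, v} \<in> C"
    and "\<forall>j\<in>C. k j \<ge> 1" "t = s + 2 * (\<Sum>j\<in>C. k j - 1) + 1"
  shows "\<exists>j\<in>C. \<exists>\<phi>. nested_embedding c j (k j) {s..t} \<phi>"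
  using assms(2-4)
proof (induction "\<Sum>j\<in>C. k j - 1" arbitrary: k s t rule: less_induct)
  case less
  define j where "j = c {s, t}"
  have "s < t" using less.prems(3) by simp
  then have "j \<in> C" using less.prems(1) by (simp add: j_def)
  show ?case
  proof (cases "k j = 1")
    case True
    have "\<exists>\<phi>. nested_embedding c j (Suc 0) {s..t} \<phi>"
      using nested_embedding_extend[OF nested_embedding_zero \<open>s < t\<close>] by (simp add: j_def)
    then show ?thesis using True \<open>j \<in> C\<close> by (metis One_nat_def)
  next
    case False
    define k' where "k' = k(j := k j - 1)"
    have "k j \<ge> 2" using False less.prems(2) \<open>j \<in> C\<close> by fastforce
    have sum_split: "(\<Sum>i\<in>C. f i - 1) = f j - 1 + (\<Sum>i\<in>C - {j}. f i - 1)" for f :: "nat \<Rightarrow> nat"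
      using sum.remove[OF assms(1) \<open>j \<in> C\<close>] .
    have "(\<Sum>i\<in>C - {j}. k' i - 1) = (\<Sum>i\<in>C - {j}. k i - 1)"
      by (rule sum.cong) (auto simp: k'_def)
    then have sum_k': "(\<Sum>i\<in>C. k i - 1) = Suc (\<Sum>i\<in>C. k' i - 1)"
      using sum_split[of k] sum_split[of k'] \<open>k j \<ge> 2\<close> by (simp add: k'_def)
    have "\<exists>j'\<in>C. \<exists>\<psi>. nested_embedding c j' (k' j') {Suc s..t - 1} \<psi>"
    proof (rule less.hyps)
      show "(\<Sum>i\<in>C. k' i - 1) < (\<Sum>i\<in>C. k i - 1)"
        using sum_k' by simp
      show "\<forall>u\<in>{Suc s..t - 1}. \<forall>v\<in>{Suc s..t - 1}. u \<noteq> v \<longrightarrow> c {u, v} \<in> C"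
        using less.prems(1) by auto
      show "\<forall>i\<in>C. 1 \<le> k' i"
        using less.prems(2) \<open>k j \<ge> 2\<close> by (auto simp: k'_def)
      show "t - 1 = Suc s + 2 * (\<Sum>i\<in>C. k' i - 1) + 1"
        using less.prems(3) sum_k' by simp
    qed
    then obtain j' \<psi> where "j' \<in> C" and \<psi>: "nested_embedding c j' (k' j') {Suc s..t - 1} \<psi>"
      by blast
    have inner: "{Suc s..t - 1} = {s<..<t}" by auto
    show ?thesis
    proof (cases "j' = j")
      case True
      then have "\<exists>\<phi>. nested_embedding c j (Suc (k j - 1)) {s..t} \<phi>"
        using nested_embedding_extend \<psi> \<open>s < t\<close> inner by (simp add: k'_def j_def)
      then show ?thesis using \<open>j \<in> C\<close> \<open>k j \<ge> 2\<close> Suc_pred' by fastforce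
    next
      case False
      then have "nested_embedding c j' (k j') {s..t} \<psi>"
        using nested_embedding_mono[OF \<psi>] by (auto simp: k'_def)
      then show ?thesis using \<open>j' \<in> C\<close> by blast
    qed
  qed
qed

lemma strict_mono_on_add_diff_le:
  fixes f :: "nat \<Rightarrow> nat"
  assumes "strict_mono_on {0..<m} f" "i \<le> j" "j < m"
  shows "f i + (j - i) \<le> f j"
  using assms(2,3)
proof (induction j)
  case 0
  then show ?case by simp
next
  case (Suc j)
  show ?case
  proof (cases "i = Suc j")
    case False
    then have "f i + (j - i) \<le> f j" using Suc by simp
    moreover have "f j < f (Suc j)" using Suc.prems by (intro strict_mono_onD[OF assms(1)]) auto
    ultimately show ?thesis using Suc.prems by linarith
  qed simp
qed

definition window_coloring :: "nat \<Rightarrow> nat \<Rightarrow> nat set \<Rightarrow> nat" where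
  "window_coloring l w S = (if S \<subseteq> {l..<l + w} then 2 else 1)"

lemma two_coloring_window_coloring: "two_coloring n (window_coloring l w)"
  unfolding two_coloring_def window_coloring_def by simp

lemma no_nested_embedding_inside_window:
  assumes "k \<ge> 1"
  shows "\<not> nested_embedding (window_coloring l (2*k - 1)) 2 k I \<phi>"
proof
  assume emb: "nested_embedding (window_coloring l (2*k - 1)) 2 k I \<phi>"
  then have "window_coloring l (2*k - 1) {\<phi> 0, \<phi> (2*k - 1 - 0)} = 2"
    using assms unfolding nested_embedding_def by simp
  then have "{\<phi> 0, \<phi> (2*k - 1)} \<subseteq> {l..<l + (2*k - 1)}"
    unfolding window_coloring_def by (simp split: if_splits)
  moreover have "\<phi> 0 + (2*k - 1) \<le> \<phi> (2*k - 1)"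
    using emb assms strict_mono_on_add_diff_le[of "2*k" \<phi> 0 "2*k - 1"]
    unfolding nested_embedding_def by simp
  ultimately show False by auto
qed

lemma no_nested_embedding_around_window:
  assumes "k \<ge> 1" "n + 2 \<le> 2*k + w"
  shows "\<not> nested_embedding (window_coloring (k - 1) w) 1 k {0..<n} \<phi>"
proof
  assume emb: "nested_embedding (window_coloring (k - 1) w) 1 k {0..<n} \<phi>"
  then have mono: "strict_mono_on {0..<2*k} \<phi>" and "\<phi> (2*k - 1) < n"
    and pairs: "\<forall>i<k. window_coloring (k - 1) w {\<phi> i, \<phi> (2*k - 1 - i)} = 1"
    using assms(1) unfolding nested_embedding_def by (auto simp: image_subset_iff)
  have "2*k - 1 - (k - 1) = k" using assms(1) by simp
  then have "window_coloring (k - 1) w {\<phi> (k - 1), \<phi> k} = 1"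
    using pairs[rule_format, of "k - 1"] assms(1) by simp
  moreover have "\<phi> 0 + (k - 1 - 0) \<le> \<phi> (k - 1)"
    by (rule strict_mono_on_add_diff_le[OF mono]) (use assms(1) in auto)
  then have "k - 1 \<le> \<phi> (k - 1)" by simp
  moreover have "\<phi> (k - 1) < \<phi> k"
    using strict_mono_onD[OF mono, of "k - 1" k] assms(1) by auto
  moreover have "\<phi> k + (2*k - 1 - k) \<le> \<phi> (2*k - 1)"
    by (rule strict_mono_on_add_diff_le[OF mono]) (use assms(1) in auto)
  then have "\<phi> k < k - 1 + w"
    using assms \<open>\<phi> (2*k - 1) < n\<close> by linarith
  ultimately show False
    unfolding window_coloring_def by (simp split: if_splits)
qed

lemma ordered_ramsey_property_nested_matching:
  assumes "p \<ge> 1" "q \<ge> 1"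
  shows "ordered_ramsey_property (nested_matching (2*p)) (nested_matching (2*q)) (2*p + 2*q - 2)"
  unfolding ordered_ramsey_property_def
proof (intro allI impI)
  fix c assume "two_coloring (2*p + 2*q - 2) c"
  then have colors: "\<forall>u\<in>{0..2*p + 2*q - 3}. \<forall>v\<in>{0..2*p + 2*q - 3}. u \<noteq> v \<longrightarrow> c {u, v} \<in> {1, 2}"
    unfolding two_coloring_def using assms by auto
  define k :: "nat \<Rightarrow> nat" where "k j = (if j = 1 then p else q)" for j
  have "\<exists>j\<in>{1, 2}. \<exists>\<phi>. nested_embedding c j (k j) {0..2*p + 2*q - 3} \<phi>"
    using assms by (intro nested_embedding_exists[OF _ colors]) (auto simp: k_def)
  moreover have "{0..2*p + 2*q - 3} = {0..<2*p + 2*q - 2}" using assms by auto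
  ultimately show "(\<exists>\<phi>. incr_embedding (nested_matching (2*p)) (2*p + 2*q - 2) c 1 \<phi>) \<or>
      (\<exists>\<phi>. incr_embedding (nested_matching (2*q)) (2*p + 2*q - 2) c 2 \<phi>)"
    by (auto simp: incr_embedding_nested_matching_iff k_def)
qed

lemma not_ordered_ramsey_property_nested_matching:
  assumes "p \<ge> 1" "q \<ge> 1" "n + 2 < 2*p + 2*q"
  shows "\<not> ordered_ramsey_property (nested_matching (2*p)) (nested_matching (2*q)) n"
  unfolding ordered_ramsey_property_def incr_embedding_nested_matching_iff
  using two_coloring_window_coloring[of n "p - 1" "2*q - 1"]
    no_nested_embedding_around_window[of p n "2*q - 1"]
    no_nested_embedding_inside_window[of q "p - 1"] assms
  by auto

lemma R_ord_nested_matching: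
  assumes "p \<ge> 1" "q \<ge> 1"
  shows "R_ord (nested_matching (2*p)) (nested_matching (2*q)) = 2*p + 2*q - 2"
  unfolding R_ord_def
proof (rule Least_equality)
  show "ordered_ramsey_property (nested_matching (2*p)) (nested_matching (2*q)) (2*p + 2*q - 2)"
    using ordered_ramsey_property_nested_matching[OF assms] .
  fix n assume "ordered_ramsey_property (nested_matching (2*p)) (nested_matching (2*q)) n"
  then show "2*p + 2*q - 2 \<le> n"
    using not_ordered_ramsey_property_nested_matching[OF assms, of n] by fastforce
qed

theorem theorem4p27:
  fixes a b :: nat
  assumes "even a" "even b" "a \<ge> 2" "b \<ge> 2"
  shows "R_ord (nested_matching a) (nested_matching b) = a + b - 2"
  using assms by (auto elim!: evenE simp: R_ord_nested_matching)

end
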